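(* Let $\lambda$ be a positive integer that is a sum of two squares of rational integers. Then for every $1\leq k\leq 3$, every $k$-icube in $\mathbb{Z}[i]^3$ of norm $\lambda$ can be extended to a $3$-icube (of norm $\lambda$).
   Context: For $1\leq k\leq n$, a matrix $(v_1|\dotsc|v_k)\in\mathbb{Z}[i]^{n\times k}$ is a $k$-icube in $\mathbb{Z}[i]^n$ of norm $\lambda>0$ if $v_i^*v_j=\lambda$ for $i=j$ and $v_i^*v_j=0$ for $i\neq j$, where $v^*=\overline{v}^T$. An $\ell$-icube $A$ can be extended to a $k$-icube ($\ell<k$) if some $\ell$ columns of some $k$-icube form $A$. *)

theory Defs
  imports Complex_Main
begin

definition gaussian_int :: "complex \<Rightarrow> bool" where
  "gaussian_int z \<longleftrightarrow> Re z \<in> \<int> \<and> Im z \<in> \<int>"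

text \<open>An n x k matrix is represented by its entries M i j (row i < n, column j < k);
  entries outside this range are irrelevant.\<close>
definition herm_col_prod :: "nat \<Rightarrow> (nat \<Rightarrow> nat \<Rightarrow> complex) \<Rightarrow> nat \<Rightarrow> nat \<Rightarrow> complex" where
  "herm_col_prod n M j j' = (\<Sum>i<n. cnj (M i j) * M i j')"

definition icube :: "nat \<Rightarrow> nat \<Rightarrow> real \<Rightarrow> (nat \<Rightarrow> nat \<Rightarrow> complex) \<Rightarrow> bool" where
  "icube n k lam M \<longleftrightarrow> 1 \<le> k \<and> k \<le> n \<and> lam > 0 \<and>
     (\<forall>i<n. \<forall>j<k. gaussian_int (M i j)) \<and>
     (\<forall>j<k. \<forall>j'<k. herm_col_prod n M j j' = (if j = j' then complex_of_real lam else 0))"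

definition extends_to_icube :: "nat \<Rightarrow> nat \<Rightarrow> nat \<Rightarrow> real \<Rightarrow> (nat \<Rightarrow> nat \<Rightarrow> complex) \<Rightarrow> bool" where
  "extends_to_icube n l k lam A \<longleftrightarrow>
     (\<exists>B \<sigma>. icube n k lam B \<and> inj_on \<sigma> {..<l} \<and> \<sigma> ` {..<l} \<subseteq> {..<k} \<and>
        (\<forall>i<n. \<forall>j<l. B i (\<sigma> j) = A i j))"

end

theory Submission
  imports Defs
begin

text \<open>
  Write \<lambda> = N(\<beta>) = \<beta> cnj \<beta> with \<beta> \<in> Z[i]. An icube of norm \<lambda> consists of pairwise
  orthogonal Gaussian vectors of norm N(\<beta>), so it suffices to find a further such vector
  orthogonal to one, respectively two, given ones.

  For two vectors v1, v2 the conjugated cross product w is orthogonal to both and has norm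
  N(\<beta>)^2. Write w = h w' with w' primitive. Projecting a vector e with <e, w'> = 1 to the
  orthogonal complement of v1 and v2 shows that N(\<beta>) divides N(h) in Z[i]; as Z[i] is
  Euclidean, the quotient is itself a norm N(t), and t w' is the required vector.

  For one vector v we may, by the same norm argument, assume v primitive. The Gaussian vectors
  orthogonal to v and congruent modulo \<beta> to a multiple of v form a lattice of rank two on
  which the Hermitian form is divisible by N(\<beta>), and a unimodular completion of v provides two
  of its vectors with Gram determinant N(\<beta>)^2. Gauss reduction, which rounds to the nearest
  Gaussian integer with error at most 1/2, then yields such a pair whose first vector has
  norm N(\<beta>).
\<close>

section \<open>Gaussian integers\<close>

lemma gaussian_int_0 [simp]: "gaussian_int 0"
  and gaussian_int_1 [simp]: "gaussian_int 1"
  by (auto simp: gaussian_int_def)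

lemma gaussian_int_add [simp]: "gaussian_int a \<Longrightarrow> gaussian_int b \<Longrightarrow> gaussian_int (a + b)"
  and gaussian_int_diff [simp]: "gaussian_int a \<Longrightarrow> gaussian_int b \<Longrightarrow> gaussian_int (a - b)"
  and gaussian_int_minus [simp]: "gaussian_int a \<Longrightarrow> gaussian_int (- a)"
  and gaussian_int_mult [simp]: "gaussian_int a \<Longrightarrow> gaussian_int b \<Longrightarrow> gaussian_int (a * b)"
  and gaussian_int_cnj [simp]: "gaussian_int a \<Longrightarrow> gaussian_int (cnj a)"
  by (auto simp: gaussian_int_def)

lemma gaussian_int_of_real_iff [simp]: "gaussian_int (complex_of_real r) \<longleftrightarrow> r \<in> \<int>"
  by (simp add: gaussian_int_def)

lemma gaussian_int_of_real_nonneg: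
  assumes "gaussian_int (complex_of_real r)" "0 \<le> r"
  obtains N :: nat where "r = real N"
  using assms by (auto elim!: Ints_cases) (metis nat_0_le of_int_0_le_iff of_nat_nat)

lemma gaussian_int_cmod_ge_1:
  assumes "gaussian_int z" "z \<noteq> 0"
  shows "1 \<le> cmod z ^ 2"
proof -
  obtain a b :: int where ab: "Re z = a" "Im z = b"
    using assms(1) by (auto simp: gaussian_int_def elim!: Ints_cases)
  then have "a \<noteq> 0 \<or> b \<noteq> 0"
    using assms(2) by (auto simp: complex_eq_iff)
  then have "1 \<le> a ^ 2 + b ^ 2"
    by (smt (verit) int_one_le_iff_zero_less zero_le_power2 zero_less_power2)
  then have "1 \<le> real_of_int (a ^ 2 + b ^ 2)"
    by linarith
  then show ?thesis
    by (simp add: cmod_power2 ab)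
qed

lemma exists_gaussian_int_near: "\<exists>q. gaussian_int q \<and> cmod (c - q) ^ 2 \<le> 1/2"
proof -
  define q where "q = of_int (round (Re c)) + \<i> * of_int (round (Im c))"
  have square_le: "x ^ 2 \<le> 1/4" if "\<bar>x\<bar> \<le> 1/2" for x :: real
    using that mult_nonneg_nonneg[of "1/2 - x" "1/2 + x"]
    by (auto simp: power2_eq_square algebra_simps abs_le_iff)
  have "cmod (c - q) ^ 2 = (Re c - round (Re c)) ^ 2 + (Im c - round (Im c)) ^ 2"
    by (simp add: cmod_power2 q_def)
  also have "\<dots> \<le> 1/2"
    using square_le[OF of_int_round_abs_le[of "Re c", unfolded abs_minus_commute]]
      square_le[OF of_int_round_abs_le[of "Im c", unfolded abs_minus_commute]] by linarith
  finally show ?thesis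
    by (intro exI[of _ q]) (simp add: q_def gaussian_int_def)
qed

lemma gaussian_int_division:
  assumes "gaussian_int a" "gaussian_int b" "b \<noteq> 0"
  obtains q r where "gaussian_int q" "gaussian_int r" "a = q * b + r" "cmod r ^ 2 \<le> cmod b ^ 2 / 2"
proof -
  obtain q where q: "gaussian_int q" "cmod (a / b - q) ^ 2 \<le> 1/2"
    using exists_gaussian_int_near by blast
  have "a - q * b = b * (a / b - q)"
    using assms(3) by (simp add: field_simps)
  then have "cmod (a - q * b) ^ 2 = cmod b ^ 2 * cmod (a / b - q) ^ 2"
    by (simp add: norm_mult power_mult_distrib)
  also have "\<dots> \<le> cmod b ^ 2 / 2"
    using mult_left_mono[OF q(2), of "cmod b ^ 2"] by simp
  finally show ?thesis
    using that[of q "a - q * b"] q(1) assms(1,2) by simp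
qed

lemma gaussian_int_bezout:
  assumes "gaussian_int a" "gaussian_int b"
  obtains g a' b' x y where "gaussian_int g" "gaussian_int a'" "gaussian_int b'"
    "gaussian_int x" "gaussian_int y" "a = g * a'" "b = g * b'" "a' * x + b' * y = 1"
proof -
  have "\<exists>g a' b' x y. gaussian_int g \<and> gaussian_int a' \<and> gaussian_int b' \<and> gaussian_int x \<and>
      gaussian_int y \<and> a = g * a' \<and> b = g * b' \<and> a' * x + b' * y = 1"
    if "cmod b ^ 2 < real n" "gaussian_int a" "gaussian_int b" for n a b
    using that
  proof (induction n arbitrary: a b)
    case 0
    then show ?case by simp
  next
    case (Suc n)
    show ?case
    proof (cases "b = 0")
      case True
      with Suc.prems(2) show ?thesis
        by (intro exI[of _ a] exI[of _ 1] exI[of _ 0] exI[of _ 1] exI[of _ 0]) simp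
    next
      case False
      obtain q r where qr: "gaussian_int q" "gaussian_int r" "a = q * b + r"
        "cmod r ^ 2 \<le> cmod b ^ 2 / 2"
        using gaussian_int_division[OF Suc.prems(2,3) False] by blast
      have "1 \<le> cmod b ^ 2"
        using gaussian_int_cmod_ge_1[OF Suc.prems(3) False] .
      then have "1 \<le> real n"
        using Suc.prems(1) by (cases n) auto
      then have "cmod r ^ 2 < real n"
        using qr(4) Suc.prems(1) by linarith
      then obtain g b' r' x y where
        "gaussian_int g" "gaussian_int b'" "gaussian_int r'" "gaussian_int x" "gaussian_int y"
        "b = g * b'" "r = g * r'" "b' * x + r' * y = 1"
        using Suc.IH[OF _ Suc.prems(3) qr(2)] by blast
      then show ?thesis
        using qr(1,3)
        by (intro exI[of _ g] exI[of _ "q * b' + r'"] exI[of _ b'] exI[of _ y] exI[of _ "x - q * y"])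
          (auto simp: algebra_simps)
    qed
  qed
  then show ?thesis
    using that assms reals_Archimedean2[of "cmod b ^ 2"] by blast
qed

lemma gaussian_norm_quotient:
  assumes "gaussian_int h" "gaussian_int \<beta>" "\<beta> \<noteq> 0" "gaussian_int c"
    and quotient: "c * (\<beta> * cnj \<beta>) = h * cnj h"
  obtains t where "gaussian_int t" "t * cnj t = c"
proof -
  obtain d h' b' x y where d: "gaussian_int d" "gaussian_int h'" "gaussian_int b'" "gaussian_int x"
      "gaussian_int y" "h = d * h'" "\<beta> = d * b'" "h' * x + b' * y = 1"
    using gaussian_int_bezout[OF assms(1,2)] by blast
  have "d \<noteq> 0" "b' \<noteq> 0"
    using assms(3) d(7) by auto
  have "(d * cnj d) * (c * (b' * cnj b')) = (d * cnj d) * (h' * cnj h')"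
    using quotient d(6,7) by (simp add: algebra_simps)
  then have coprime_quotient: "c * (b' * cnj b') = h' * cnj h'"
    using \<open>d \<noteq> 0\<close> by simp
  \<comment> \<open>After cancelling the gcd, b' is coprime to h' and therefore divides cnj h'.\<close>
  define t where "t = x * c * cnj b' + y * cnj h'"
  have "cnj h' = cnj h' * (h' * x + b' * y)"
    using d(8) by simp
  also have "\<dots> = b' * t"
    unfolding t_def by (simp add: algebra_simps flip: coprime_quotient)
  finally have "cnj h' = b' * t" .
  then have "(b' * cnj b') * (t * cnj t) = (b' * cnj b') * c"
    using coprime_quotient by (metis complex_cnj_cnj complex_cnj_mult mult.commute mult.left_commute)
  then have "t * cnj t = c"
    using \<open>b' \<noteq> 0\<close> by simp
  moreover have "gaussian_int t"
    unfolding t_def using d assms(4) by auto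
  ultimately show ?thesis
    using that by blast
qed

section \<open>Vectors in Z[i]^3\<close>

text \<open>Vectors of \<complex>^3 are functions on nat of which only the entries 0, 1, 2 matter.\<close>

definition hinner :: "(nat \<Rightarrow> complex) \<Rightarrow> (nat \<Rightarrow> complex) \<Rightarrow> complex" where
  "hinner x y = cnj (x 0) * y 0 + cnj (x 1) * y 1 + cnj (x 2) * y 2"

definition gaussian_vec :: "(nat \<Rightarrow> complex) \<Rightarrow> bool" where
  "gaussian_vec x \<longleftrightarrow> gaussian_int (x 0) \<and> gaussian_int (x 1) \<and> gaussian_int (x 2)"

definition primitive_vec :: "(nat \<Rightarrow> complex) \<Rightarrow> bool" where
  "primitive_vec v \<longleftrightarrow> (\<exists>e. gaussian_vec e \<and> hinner e v = 1)"

definition vec3 :: "complex \<Rightarrow> complex \<Rightarrow> complex \<Rightarrow> nat \<Rightarrow> complex" where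
  "vec3 a b c i = (if i = 0 then a else if i = 1 then b else c)"

definition det3 :: "(nat \<Rightarrow> complex) \<Rightarrow> (nat \<Rightarrow> complex) \<Rightarrow> (nat \<Rightarrow> complex) \<Rightarrow> complex" where
  "det3 a b c = a 0 * (b 1 * c 2 - b 2 * c 1) - a 1 * (b 0 * c 2 - b 2 * c 0)
    + a 2 * (b 0 * c 1 - b 1 * c 0)"

definition cross_cnj :: "(nat \<Rightarrow> complex) \<Rightarrow> (nat \<Rightarrow> complex) \<Rightarrow> nat \<Rightarrow> complex" where
  "cross_cnj a b = vec3 (cnj (a 1 * b 2 - a 2 * b 1)) (cnj (a 2 * b 0 - a 0 * b 2))
    (cnj (a 0 * b 1 - a 1 * b 0))"

lemma less_3_cases: "(k :: nat) < 3 \<Longrightarrow> k = 0 \<or> k = 1 \<or> k = 2"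
  by auto

lemma vec3_simps [simp]:
  "vec3 a b c 0 = a" "vec3 a b c 1 = b" "vec3 a b c (Suc 0) = b" "vec3 a b c 2 = c"
  by (auto simp: vec3_def)

lemma gaussian_vec_vec3 [simp]:
  "gaussian_vec (vec3 a b c) \<longleftrightarrow> gaussian_int a \<and> gaussian_int b \<and> gaussian_int c"
  by (simp add: gaussian_vec_def)

lemma hinner_cnj_commute: "cnj (hinner x y) = hinner y x"
  by (simp add: hinner_def mult.commute)

lemma hinner_self: "hinner x x = of_real (cmod (x 0) ^ 2 + cmod (x 1) ^ 2 + cmod (x 2) ^ 2)"
proof -
  have "cnj z * z = of_real (cmod z ^ 2)" for z
    by (metis complex_norm_square mult.commute)
  then show ?thesis
    by (simp only: hinner_def of_real_add)
qed

lemma hinner_self_eq_0: "hinner x x = 0 \<longleftrightarrow> x 0 = 0 \<and> x 1 = 0 \<and> x 2 = 0"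
proof -
  have "cmod (x 0) ^ 2 + cmod (x 1) ^ 2 + cmod (x 2) ^ 2 = 0 \<longleftrightarrow>
      cmod (x 0) ^ 2 = 0 \<and> cmod (x 1) ^ 2 = 0 \<and> cmod (x 2) ^ 2 = 0"
    by (smt (verit) zero_le_power2)
  then show ?thesis
    by (simp only: hinner_self of_real_eq_0_iff) simp
qed

lemma primitive_vec_hinner_self_nonzero:
  assumes "primitive_vec v"
  shows "hinner v v \<noteq> 0"
proof
  assume "hinner v v = 0"
  then have "v 0 = 0" "v 1 = 0" "v 2 = 0"
    using hinner_self_eq_0 by blast+
  then show False
    using assms by (auto simp: primitive_vec_def hinner_def)
qed

lemma hinner_scale_left [simp]: "hinner (\<lambda>k. c * x k) y = cnj c * hinner x y"
  and hinner_scale_right [simp]: "hinner x (\<lambda>k. c * y k) = c * hinner x y"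
  by (simp_all add: hinner_def algebra_simps)

lemma hinner_diff_left [simp]: "hinner (\<lambda>k. x k - y k) z = hinner x z - hinner y z"
  and hinner_diff_right [simp]: "hinner x (\<lambda>k. y k - z k) = hinner x y - hinner x z"
  by (simp_all add: hinner_def algebra_simps)

lemma gaussian_vec_scale [simp]:
  "gaussian_int c \<Longrightarrow> gaussian_vec x \<Longrightarrow> gaussian_vec (\<lambda>k. c * x k)"
  by (simp add: gaussian_vec_def)

lemma gaussian_vecD:
  "gaussian_vec x \<Longrightarrow> gaussian_int (x 0)" "gaussian_vec x \<Longrightarrow> gaussian_int (x 1)"
  "gaussian_vec x \<Longrightarrow> gaussian_int (x 2)"
  by (simp_all add: gaussian_vec_def)

lemma gaussian_int_hinner [simp]:
  "gaussian_vec x \<Longrightarrow> gaussian_vec y \<Longrightarrow> gaussian_int (hinner x y)"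
  by (simp add: gaussian_vec_def hinner_def)

lemma gaussian_vec_content:
  assumes "gaussian_vec x"
  obtains h y where "gaussian_int h" "gaussian_vec y" "primitive_vec y"
    "x 0 = h * y 0" "x 1 = h * y 1" "x 2 = h * y 2"
proof -
  obtain g a b p q where ab: "gaussian_int g" "gaussian_int a" "gaussian_int b" "gaussian_int p"
      "gaussian_int q" "x 0 = g * a" "x 1 = g * b" "a * p + b * q = 1"
    using gaussian_int_bezout[OF gaussian_vecD(1,2)[OF assms]] by blast
  obtain h g' c p' q' where gc: "gaussian_int h" "gaussian_int g'" "gaussian_int c" "gaussian_int p'"
      "gaussian_int q'" "g = h * g'" "x 2 = h * c" "g' * p' + c * q' = 1"
    using gaussian_int_bezout[OF ab(1) gaussian_vecD(3)[OF assms]] by blast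
  let ?y = "vec3 (g' * a) (g' * b) c"
  let ?e = "vec3 (cnj (p' * p)) (cnj (p' * q)) (cnj q')"
  have "hinner ?e ?y = p' * g' * (a * p + b * q) + c * q'"
    by (simp add: hinner_def algebra_simps)
  also have "\<dots> = 1"
    using ab(8) gc(8) by (simp add: mult.commute)
  finally have "primitive_vec ?y"
    unfolding primitive_vec_def using ab gc by (intro exI[of _ ?e]) simp
  then show ?thesis
    using that[of h ?y] ab gc by simp
qed

lemma primitive_vec_completion:
  assumes "gaussian_vec v" "primitive_vec v"
  obtains m n where "gaussian_vec m" "gaussian_vec n" "det3 m v n = 1"
proof -
  obtain e where e: "gaussian_vec e" "hinner e v = 1"
    using assms(2) by (auto simp: primitive_vec_def)
  obtain g a b x y where ab: "gaussian_int g" "gaussian_int a" "gaussian_int b" "gaussian_int x"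
      "gaussian_int y" "v 0 = g * a" "v 1 = g * b" "a * x + b * y = 1"
    using gaussian_int_bezout[OF gaussian_vecD(1,2)[OF assms(1)]] by blast
  define p where "p = cnj (e 0) * a + cnj (e 1) * b"
  define n where "n = vec3 (- cnj (e 2) * a) (- cnj (e 2) * b) p"
  have "g * p + cnj (e 2) * v 2 = 1"
    using e(2) ab(6,7) by (simp add: p_def hinner_def algebra_simps)
  have "det3 (vec3 y (- x) 0) v n = (a * x + b * y) * (g * p + cnj (e 2) * v 2)"
    using ab(6,7) by (simp add: n_def det3_def algebra_simps)
  also have "\<dots> = 1"
    using ab(8) \<open>g * p + cnj (e 2) * v 2 = 1\<close> by simp
  finally have "det3 (vec3 y (- x) 0) v n = 1" .
  moreover have "gaussian_vec n"
    using e(1) ab by (simp add: gaussian_vec_def n_def p_def)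
  moreover have "gaussian_vec (vec3 y (- x) 0)"
    using ab(4,5) by simp
  ultimately show ?thesis
    using that by blast
qed

lemma det3_mult_cnj:
  "det3 m v n * cnj (det3 m v n) =
    hinner m m * (hinner v v * hinner n n - hinner v n * hinner n v)
    - hinner m v * (hinner v m * hinner n n - hinner v n * hinner n m)
    + hinner m n * (hinner v m * hinner n v - hinner v v * hinner n m)"
  unfolding hinner_def det3_def by (simp add: algebra_simps)

section \<open>A vector orthogonal to two orthogonal vectors\<close>

lemma hinner_cross_cnj:
  "hinner a (cross_cnj a b) = 0" "hinner b (cross_cnj a b) = 0"
  "hinner (cross_cnj a b) (cross_cnj a b) = hinner a a * hinner b b - hinner a b * hinner b a"
  by (simp_all add: hinner_def cross_cnj_def algebra_simps)

lemma orthogonal_parallel_cross_cnj: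
  assumes "hinner a x = 0" "hinner b x = 0" "k < 3"
  shows "hinner (cross_cnj a b) (cross_cnj a b) * x k = hinner (cross_cnj a b) x * cross_cnj a b k"
proof -
  let ?w = "cross_cnj a b"
  have "hinner ?w ?w * x 0 - hinner ?w x * ?w 0 =
      cnj (?w 2) * (cnj (b 1) * hinner a x - cnj (a 1) * hinner b x)
      - cnj (?w 1) * (cnj (b 2) * hinner a x - cnj (a 2) * hinner b x)"
    "hinner ?w ?w * x 1 - hinner ?w x * ?w 1 =
      cnj (?w 0) * (cnj (b 2) * hinner a x - cnj (a 2) * hinner b x)
      - cnj (?w 2) * (cnj (b 0) * hinner a x - cnj (a 0) * hinner b x)"
    "hinner ?w ?w * x 2 - hinner ?w x * ?w 2 =
      cnj (?w 1) * (cnj (b 0) * hinner a x - cnj (a 0) * hinner b x)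
      - cnj (?w 0) * (cnj (b 1) * hinner a x - cnj (a 1) * hinner b x)"
    by (simp_all add: hinner_def cross_cnj_def algebra_simps)
  then show ?thesis
    using assms less_3_cases by auto
qed

lemma cross_cnj_content_norm_dvd:
  assumes "gaussian_vec v1" "gaussian_vec v2" "L \<noteq> 0"
    and norms: "hinner v1 v1 = L" "hinner v2 v2 = L" and orth: "hinner v1 v2 = 0"
    and "primitive_vec w" and content: "\<And>k. k < 3 \<Longrightarrow> cross_cnj v1 v2 k = h * w k"
  obtains c where "gaussian_int c" "h * cnj h = c * L"
proof -
  let ?W = "cross_cnj v1 v2"
  obtain e where e: "gaussian_vec e" "hinner e w = 1"
    using \<open>primitive_vec w\<close> by (auto simp: primitive_vec_def)
  have "gaussian_int L"
    using assms(1) norms(1) by auto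
  \<comment> \<open>L times the orthogonal projection of e away from v1 and v2, hence parallel to w\<close>
  define x where "x = (\<lambda>k. L * e k - hinner v1 e * v1 k - hinner v2 e * v2 k)"
  have orth': "hinner v2 v1 = 0"
    using orth hinner_cnj_commute[of v1 v2] by simp
  have "hinner v1 x = 0" "hinner v2 x = 0"
    using norms orth orth' by (simp_all add: x_def)
  then have parallel: "hinner ?W ?W * x k = hinner ?W x * ?W k" if "k < 3" for k
    using orthogonal_parallel_cross_cnj that by blast
  have W_orth: "hinner ?W v1 = 0" "hinner ?W v2 = 0"
    using hinner_cross_cnj(1,2) hinner_cnj_commute by (metis complex_cnj_zero)+
  have "hinner ?W e = cnj h * cnj (hinner e w)"
    using content by (simp add: hinner_def algebra_simps)
  then have "hinner ?W x = L * cnj h"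
    using W_orth e(2) by (simp add: x_def)
  moreover have "hinner ?W ?W = L * L"
    using hinner_cross_cnj(3) norms orth orth' by simp
  ultimately have Lx: "L * x k = h * cnj h * w k" if "k < 3" for k
    using parallel[OF that] content[OF that] \<open>L \<noteq> 0\<close> by (simp add: algebra_simps)
  have "L * hinner e x = cnj (e 0) * (L * x 0) + cnj (e 1) * (L * x 1) + cnj (e 2) * (L * x 2)"
    by (simp add: hinner_def algebra_simps)
  also have "\<dots> = h * cnj h * hinner e w"
    using Lx[of 0] Lx[of 1] Lx[of 2] by (simp add: hinner_def algebra_simps)
  finally have "L * hinner e x = h * cnj h * hinner e w" .
  moreover have "gaussian_int (hinner e x)"
    using e(1) assms(1,2) \<open>gaussian_int L\<close> by (simp add: x_def)
  ultimately show ?thesis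
    using that[of "hinner e x"] e(2) by (simp add: mult.commute)
qed

lemma exists_orthogonal_to_two:
  assumes "gaussian_vec v1" "gaussian_vec v2" "gaussian_int \<beta>" "\<beta> \<noteq> 0"
    and norms: "hinner v1 v1 = \<beta> * cnj \<beta>" "hinner v2 v2 = \<beta> * cnj \<beta>" and orth: "hinner v1 v2 = 0"
  obtains u where "gaussian_vec u" "hinner v1 u = 0" "hinner v2 u = 0" "hinner u u = \<beta> * cnj \<beta>"
proof -
  let ?L = "\<beta> * cnj \<beta>" and ?W = "cross_cnj v1 v2"
  have "?L \<noteq> 0"
    using \<open>\<beta> \<noteq> 0\<close> by simp
  have "gaussian_vec ?W"
    using assms(1,2) by (simp add: cross_cnj_def gaussian_vec_def)
  then obtain h w where hw: "gaussian_int h" "gaussian_vec w" "primitive_vec w"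
      "?W 0 = h * w 0" "?W 1 = h * w 1" "?W 2 = h * w 2"
    by (rule gaussian_vec_content)
  have content: "?W k = h * w k" if "k < 3" for k
    using hw(4-6) less_3_cases[OF that] by auto
  have "h * cnj h * hinner w w = hinner ?W ?W"
    unfolding hinner_def using hw(4-6) by (simp add: algebra_simps)
  also have "\<dots> = ?L * ?L"
    using hinner_cross_cnj(3)[of v1 v2] norms orth hinner_cnj_commute[of v1 v2] by simp
  finally have "h * cnj h * hinner w w = ?L * ?L" .
  then have "h \<noteq> 0"
    using \<open>?L \<noteq> 0\<close> by auto
  obtain c where c: "gaussian_int c" "h * cnj h = c * ?L"
    using cross_cnj_content_norm_dvd[OF assms(1,2) \<open>?L \<noteq> 0\<close> norms orth hw(3) content] .
  then obtain t where t: "gaussian_int t" "t * cnj t = c"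
    using gaussian_norm_quotient[OF hw(1) assms(3,4)] by metis
  have "hinner v1 ?W = h * hinner v1 w" "hinner v2 ?W = h * hinner v2 w"
    using hw(4-6) by (simp_all add: hinner_def algebra_simps)
  then have "hinner v1 w = 0" "hinner v2 w = 0"
    using hinner_cross_cnj(1,2) \<open>h \<noteq> 0\<close> by auto
  moreover have "?L * (t * cnj t * hinner w w) = ?L * ?L"
    using \<open>h * cnj h * hinner w w = ?L * ?L\<close> c(2) t(2) by (simp add: algebra_simps)
  then have "t * cnj t * hinner w w = ?L"
    using \<open>?L \<noteq> 0\<close> mult_left_cancel by blast
  ultimately show ?thesis
    using that[of "\<lambda>k. t * w k"] t(1) hw(2) by (simp add: ac_simps)
qed

section \<open>A vector orthogonal to one vector\<close>

definition orth_cong :: "(nat \<Rightarrow> complex) \<Rightarrow> complex \<Rightarrow> (nat \<Rightarrow> complex) \<Rightarrow> bool" where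
  "orth_cong v \<beta> y \<longleftrightarrow> gaussian_vec y \<and> hinner v y = 0 \<and>
     (\<exists>s a. gaussian_int s \<and> gaussian_vec a \<and> (\<forall>k. y k = s * v k + \<beta> * a k))"

definition gram2 :: "(nat \<Rightarrow> complex) \<Rightarrow> (nat \<Rightarrow> complex) \<Rightarrow> complex" where
  "gram2 y z = hinner y y * hinner z z - hinner y z * hinner z y"

lemma gram2_commute: "gram2 y z = gram2 z y"
  by (simp add: gram2_def algebra_simps)

lemma gram2_diff_right: "gram2 y (\<lambda>k. z k - q * y k) = gram2 y z"
  by (simp add: gram2_def hinner_def algebra_simps)

lemma orth_congI:
  assumes "gaussian_vec y" "hinner v y = 0" "gaussian_int s" "gaussian_vec a"
    "\<forall>k. y k = s * v k + \<beta> * a k"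
  shows "orth_cong v \<beta> y"
  using assms by (auto simp: orth_cong_def)

lemma orth_cong_diff:
  assumes "orth_cong v \<beta> y" "orth_cong v \<beta> z" "gaussian_int q"
  shows "orth_cong v \<beta> (\<lambda>k. z k - q * y k)"
proof -
  obtain s a where y: "gaussian_vec y" "hinner v y = 0" "gaussian_int s" "gaussian_vec a"
      "\<forall>k. y k = s * v k + \<beta> * a k"
    using assms(1) unfolding orth_cong_def by blast
  obtain s' b where z: "gaussian_vec z" "hinner v z = 0" "gaussian_int s'" "gaussian_vec b"
      "\<forall>k. z k = s' * v k + \<beta> * b k"
    using assms(2) unfolding orth_cong_def by blast
  show ?thesis
  proof (rule orth_congI[where s = "s' - q * s" and a = "\<lambda>k. b k - q * a k"])
    show "gaussian_vec (\<lambda>k. z k - q * y k)" "gaussian_vec (\<lambda>k. b k - q * a k)"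
      using y(1,4) z(1,4) assms(3) by (simp_all add: gaussian_vec_def)
    show "\<forall>k. z k - q * y k = (s' - q * s) * v k + \<beta> * (b k - q * a k)"
      using y(5) z(5) by (simp add: algebra_simps)
    show "hinner v (\<lambda>k. z k - q * y k) = 0"
      using y(2) z(2) by simp
    show "gaussian_int (s' - q * s)"
      using y(3) z(3) assms(3) by (intro gaussian_int_diff gaussian_int_mult)
  qed
qed

lemma orth_cong_hinner_dvd:
  assumes "orth_cong v \<beta> y" "orth_cong v \<beta> z" "hinner v v = \<beta> * cnj \<beta>" "\<beta> \<noteq> 0"
  obtains c where "gaussian_int c" "hinner y z = \<beta> * cnj \<beta> * c"
proof -
  obtain s a where y: "hinner v y = 0" "gaussian_int s" "gaussian_vec a"
      "\<forall>k. y k = s * v k + \<beta> * a k"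
    using assms(1) unfolding orth_cong_def by blast
  obtain s' b where z: "hinner v z = 0" "gaussian_int s'" "gaussian_vec b"
      "\<forall>k. z k = s' * v k + \<beta> * b k"
    using assms(2) unfolding orth_cong_def by blast
  have "hinner v y = s * hinner v v + \<beta> * hinner v a" "hinner v z = s' * hinner v v + \<beta> * hinner v b"
    using y(4) z(4) by (simp_all add: hinner_def algebra_simps)
  then have "\<beta> * (s * cnj \<beta> + hinner v a) = 0" "\<beta> * (s' * cnj \<beta> + hinner v b) = 0"
    using y(1) z(1) assms(3) by (simp_all add: algebra_simps)
  then have va: "hinner v a = - (s * cnj \<beta>)" and vb: "hinner v b = - (s' * cnj \<beta>)"
    using assms(4) by (simp_all add: add_eq_0_iff)
  then have av: "hinner a v = - (cnj s * \<beta>)"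
    using hinner_cnj_commute[of v a] by simp
  have "hinner y z = cnj s * s' * hinner v v + cnj s * \<beta> * hinner v b + cnj \<beta> * s' * hinner a v
      + cnj \<beta> * \<beta> * hinner a b"
    using y(4) z(4) by (simp add: hinner_def algebra_simps)
  also have "\<dots> = cnj s * s' * (\<beta> * cnj \<beta>) + cnj s * \<beta> * - (s' * cnj \<beta>)
      + cnj \<beta> * s' * - (cnj s * \<beta>) + cnj \<beta> * \<beta> * hinner a b"
    by (simp only: assms(3) vb av)
  also have "\<dots> = \<beta> * cnj \<beta> * (hinner a b - cnj s * s')"
    by (simp add: algebra_simps)
  finally show ?thesis
    using that[of "hinner a b - cnj s * s'"] y(2,3) z(2,3) by simp
qed

lemma orth_cong_norm:
  assumes "orth_cong v \<beta> y" "hinner v v = \<beta> * cnj \<beta>" "\<beta> \<noteq> 0"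
  obtains N :: nat where "hinner y y = \<beta> * cnj \<beta> * of_nat N"
proof -
  obtain c where c: "gaussian_int c" "hinner y y = \<beta> * cnj \<beta> * c"
    using orth_cong_hinner_dvd[OF assms(1,1,2,3)] by blast
  define \<rho> where "\<rho> = cmod (y 0) ^ 2 + cmod (y 1) ^ 2 + cmod (y 2) ^ 2"
  have "c = of_real (\<rho> / cmod \<beta> ^ 2)"
    using c(2) hinner_self[of y] assms(3) by (simp add: \<rho>_def field_simps flip: complex_norm_square)
  moreover have "0 \<le> \<rho> / cmod \<beta> ^ 2"
    by (simp add: \<rho>_def)
  ultimately obtain N where "c = of_nat N"
    using c(1) by (metis gaussian_int_of_real_nonneg of_real_of_nat_eq)
  then show ?thesis
    using that c(2) by blast
qed

lemma exists_gram2_reduction: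
  assumes "hinner y y \<noteq> 0"
  obtains q where "gaussian_int q"
    "cmod (hinner y y) * cmod (hinner (\<lambda>k. z k - q * y k) (\<lambda>k. z k - q * y k))
      \<le> cmod (gram2 y z) + cmod (hinner y y) ^ 2 / 2"
proof -
  let ?A = "hinner y y" and ?B = "hinner y z"
  obtain q where q: "gaussian_int q" "cmod (?B / ?A - q) ^ 2 \<le> 1/2"
    using exists_gaussian_int_near by blast
  let ?z = "\<lambda>k. z k - q * y k"
  have "?A * hinner ?z ?z = gram2 y z + (q * ?A - ?B) * cnj (q * ?A - ?B)"
    by (simp add: gram2_def hinner_def algebra_simps)
  then have "cmod (?A * hinner ?z ?z) \<le> cmod (gram2 y z) + cmod ((q * ?A - ?B) * cnj (q * ?A - ?B))"
    by (simp only: norm_triangle_ineq)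
  then have "cmod ?A * cmod (hinner ?z ?z) \<le> cmod (gram2 y z) + cmod (q * ?A - ?B) ^ 2"
    by (simp only: norm_mult complex_mod_cnj power2_eq_square)
  moreover have "q * ?A - ?B = - ?A * (?B / ?A - q)"
    using assms by (simp add: field_simps)
  then have "cmod (q * ?A - ?B) ^ 2 = cmod ?A ^ 2 * cmod (?B / ?A - q) ^ 2"
    by (simp add: norm_mult power_mult_distrib)
  ultimately have "cmod ?A * cmod (hinner ?z ?z) \<le> cmod (gram2 y z) + cmod ?A ^ 2 * cmod (?B / ?A - q) ^ 2"
    by simp
  also have "\<dots> \<le> cmod (gram2 y z) + cmod ?A ^ 2 / 2"
    using mult_left_mono[OF q(2), of "cmod ?A ^ 2"] by simp
  finally show ?thesis
    using that q(1) by blast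
qed

lemma reduced_norm_eq_1:
  fixes N N' :: nat
  assumes "N \<noteq> 0" "N \<le> N'" "real N * real N' \<le> 1 + real N ^ 2 / 2"
  shows "N = 1"
proof -
  have "real N * real N \<le> real N * real N'"
    using assms(2) by (simp add: mult_left_mono)
  with assms(3) have "real N * real N \<le> 2"
    unfolding power2_eq_square by linarith
  have "N \<le> 1"
  proof (rule ccontr)
    assume "\<not> N \<le> 1"
    then have "4 \<le> real N * real N"
      using mult_mono[of 2 "real N" 2 "real N"] by simp
    with \<open>real N * real N \<le> 2\<close> show False
      by simp
  qed
  with assms(1) show ?thesis
    by simp
qed

lemma orth_cong_reduction_step:
  assumes "hinner v v = \<beta> * cnj \<beta>" "\<beta> \<noteq> 0" "orth_cong v \<beta> z1" "orth_cong v \<beta> z2"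
    and gram: "gram2 z1 z2 = (\<beta> * cnj \<beta>) * (\<beta> * cnj \<beta>)"
    and norm: "hinner z1 z1 = \<beta> * cnj \<beta> * of_nat N" "N \<noteq> 0"
  obtains z N' where "orth_cong v \<beta> z" "gram2 z z1 = (\<beta> * cnj \<beta>) * (\<beta> * cnj \<beta>)"
    "hinner z z = \<beta> * cnj \<beta> * of_nat N'" "real N * real N' \<le> 1 + real N ^ 2 / 2"
proof -
  let ?L = "\<beta> * cnj \<beta>"
  have "?L \<noteq> 0"
    using assms(2) by simp
  then obtain q where q: "gaussian_int q" and reduced:
    "cmod (hinner z1 z1) * cmod (hinner (\<lambda>k. z2 k - q * z1 k) (\<lambda>k. z2 k - q * z1 k))
      \<le> cmod (gram2 z1 z2) + cmod (hinner z1 z1) ^ 2 / 2"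
    using exists_gram2_reduction[of z1 z2] norm by auto
  let ?z = "\<lambda>k. z2 k - q * z1 k"
  have z: "orth_cong v \<beta> ?z"
    using orth_cong_diff[OF assms(3,4) q] .
  obtain N' where N': "hinner ?z ?z = ?L * of_nat N'"
    using orth_cong_norm[OF z assms(1,2)] .
  have "gram2 ?z z1 = ?L * ?L"
    using gram by (simp add: gram2_commute gram2_diff_right)
  define l where "l = cmod ?L"
  have "l > 0"
    using \<open>?L \<noteq> 0\<close> by (simp add: l_def)
  have "l * N * (l * N') \<le> l * l + (l * N) ^ 2 / 2"
    using reduced gram norm N' by (simp add: l_def norm_mult)
  then have "l ^ 2 * (N * N') \<le> l ^ 2 * (1 + N ^ 2 / 2)"
    by (simp add: power2_eq_square algebra_simps)
  then have "real N * real N' \<le> 1 + real N ^ 2 / 2"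
    using \<open>l > 0\<close> by simp
  with z N' \<open>gram2 ?z z1 = ?L * ?L\<close> show ?thesis
    using that by blast
qed

lemma orth_cong_short_vector:
  assumes "hinner v v = \<beta> * cnj \<beta>" "\<beta> \<noteq> 0" "orth_cong v \<beta> y1" "orth_cong v \<beta> y2"
    and "gram2 y1 y2 = (\<beta> * cnj \<beta>) * (\<beta> * cnj \<beta>)"
  obtains z where "orth_cong v \<beta> z" "hinner z z = \<beta> * cnj \<beta>"
proof -
  let ?L = "\<beta> * cnj \<beta>"
  \<comment> \<open>Gauss reduction applied to a pair whose first vector has least norm\<close>
  define basis_norm where "basis_norm N \<longleftrightarrow> (\<exists>z1 z2. orth_cong v \<beta> z1 \<and> orth_cong v \<beta> z2 \<and>
    gram2 z1 z2 = ?L * ?L \<and> hinner z1 z1 = ?L * of_nat N)" for N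
  obtain N0 where "hinner y1 y1 = ?L * of_nat N0"
    using orth_cong_norm[OF assms(3,1,2)] .
  then have "basis_norm N0"
    unfolding basis_norm_def using assms(3-5) by blast
  then obtain N where "basis_norm N" and minimal: "\<And>N'. basis_norm N' \<Longrightarrow> N \<le> N'"
    using ex_has_least_nat[of basis_norm N0 "\<lambda>N. N"] by auto
  then obtain z1 z2 where z: "orth_cong v \<beta> z1" "orth_cong v \<beta> z2" "gram2 z1 z2 = ?L * ?L"
      "hinner z1 z1 = ?L * of_nat N"
    unfolding basis_norm_def by blast
  have "N \<noteq> 0"
  proof
    assume "N = 0"
    then have "z1 0 = 0" "z1 1 = 0" "z1 2 = 0"
      using z(4) hinner_self_eq_0 by simp_all
    then have "gram2 z1 z2 = 0"
      by (simp add: gram2_def hinner_def)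
    with z(3) assms(2) show False
      by simp
  qed
  then obtain z N' where "orth_cong v \<beta> z" "gram2 z z1 = ?L * ?L" "hinner z z = ?L * of_nat N'"
    and reduced: "real N * real N' \<le> 1 + real N ^ 2 / 2"
    using orth_cong_reduction_step[OF assms(1,2) z] by blast
  then have "N \<le> N'"
    using minimal z(1) unfolding basis_norm_def by blast
  with \<open>N \<noteq> 0\<close> reduced have "N = 1"
    using reduced_norm_eq_1 by blast
  then show ?thesis
    using that z(1,4) by simp
qed

lemma primitive_vec_completion_orth:
  assumes "gaussian_vec v" "primitive_vec v"
  obtains m n where "gaussian_vec m" "gaussian_vec n" "det3 m v n = 1" "hinner v m = 0"
proof -
  obtain m n where mn: "gaussian_vec m" "gaussian_vec n" "det3 m v n = 1"
    using primitive_vec_completion[OF assms] .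
  obtain g p q x y where b: "gaussian_int p" "gaussian_int q" "gaussian_int x" "gaussian_int y"
      "hinner v m = g * p" "hinner v n = g * q" "p * x + q * y = 1"
    using gaussian_int_bezout[of "hinner v m" "hinner v n"] assms(1) mn(1,2) by (metis gaussian_int_hinner)
  define m' where "m' k = q * m k - p * n k" for k
  define n' where "n' k = x * m k + y * n k" for k
  have "det3 m' v n' = (p * x + q * y) * det3 m v n"
    by (simp add: m'_def n'_def det3_def algebra_simps)
  then have "det3 m' v n' = 1"
    using mn(3) b(7) by simp
  moreover have "hinner v m' = q * hinner v m - p * hinner v n"
    by (simp add: m'_def hinner_def algebra_simps)
  then have "hinner v m' = 0"
    using b(5,6) by simp
  moreover have "gaussian_vec m'" "gaussian_vec n'"
    using mn(1,2) b(1-4) by (simp_all add: m'_def n'_def gaussian_vec_def)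
  ultimately show ?thesis
    using that by blast
qed

lemma gram2_of_completion:
  assumes "det3 m v n = 1" "hinner v m = 0" and norm: "hinner v v = \<beta> * cnj \<beta>"
  shows "gram2 (\<lambda>k. \<beta> * m k) (\<lambda>k. hinner v n * v k - \<beta> * cnj \<beta> * n k)
    = (\<beta> * cnj \<beta>) * (\<beta> * cnj \<beta>)"
proof -
  define L where "L = \<beta> * cnj \<beta>"
  define s where "s = hinner v n"
  define y1 where "y1 = (\<lambda>k. \<beta> * m k)"
  define y2 where "y2 = (\<lambda>k. s * v k - L * n k)"
  have "cnj L = L"
    by (simp add: L_def mult.commute)
  have mv: "hinner m v = 0"
    using assms(2) hinner_cnj_commute[of v m] by simp
  have ns: "hinner n v = cnj s"
    by (simp add: s_def hinner_cnj_commute)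
  have unimodular: "hinner m m * (L * hinner n n - s * cnj s) - hinner m n * (L * hinner n m) = 1"
    using det3_mult_cnj[of m v n] assms(1,2) mv ns norm by (simp add: L_def s_def algebra_simps)
  have e11: "hinner y1 y1 = L * hinner m m"
    by (simp add: y1_def L_def ac_simps)
  have e12: "hinner y1 y2 = - cnj \<beta> * L * hinner m n"
    using mv by (simp add: y1_def y2_def algebra_simps)
  have e21: "hinner y2 y1 = - \<beta> * L * hinner n m"
    using ns assms(2) \<open>cnj L = L\<close> by (simp add: y1_def y2_def algebra_simps)
  have e22: "hinner y2 y2 = L * L * hinner n n - L * s * cnj s"
    using norm ns \<open>cnj L = L\<close> by (simp add: y2_def algebra_simps flip: s_def L_def)
  have "gram2 y1 y2 = L * L * (hinner m m * (L * hinner n n - s * cnj s)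
      - hinner m n * (L * hinner n m))"
    unfolding gram2_def e11 e12 e21 e22 by (simp add: L_def algebra_simps)
  then show ?thesis
    using unimodular by (simp add: y1_def y2_def s_def L_def)
qed

lemma orth_cong_pair:
  assumes "gaussian_vec v" "primitive_vec v" "gaussian_int \<beta>" and norm: "hinner v v = \<beta> * cnj \<beta>"
  obtains y1 y2 where "orth_cong v \<beta> y1" "orth_cong v \<beta> y2"
    "gram2 y1 y2 = (\<beta> * cnj \<beta>) * (\<beta> * cnj \<beta>)"
proof -
  obtain m n where mn: "gaussian_vec m" "gaussian_vec n" "det3 m v n = 1" and vm: "hinner v m = 0"
    using primitive_vec_completion_orth[OF assms(1,2)] .
  define y1 where "y1 = (\<lambda>k. \<beta> * m k)"
  define y2 where "y2 = (\<lambda>k. hinner v n * v k - \<beta> * cnj \<beta> * n k)"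
  have "orth_cong v \<beta> y1"
  proof (rule orth_congI[where s = 0 and a = m])
    show "gaussian_vec y1"
      using mn(1) assms(3) by (simp add: y1_def)
    show "hinner v y1 = 0"
      using vm by (simp add: y1_def)
  qed (simp_all add: y1_def mn(1))
  moreover have "orth_cong v \<beta> y2"
  proof (rule orth_congI[where s = "hinner v n" and a = "\<lambda>k. - cnj \<beta> * n k"])
    show "gaussian_vec y2"
      using assms(1,3) mn(2) by (simp add: y2_def gaussian_vec_def)
    have "hinner v y2 = hinner v n * hinner v v - \<beta> * cnj \<beta> * hinner v n"
      by (simp add: y2_def)
    then show "hinner v y2 = 0"
      using norm by simp
    show "gaussian_vec (\<lambda>k. - cnj \<beta> * n k)"
      using assms(3) mn(2) by (simp add: gaussian_vec_def)
  qed (simp_all add: y2_def assms(1) mn(2))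
  moreover have "gram2 y1 y2 = (\<beta> * cnj \<beta>) * (\<beta> * cnj \<beta>)"
    unfolding y1_def y2_def using gram2_of_completion[OF mn(3) vm norm] .
  ultimately show ?thesis
    using that by blast
qed

lemma exists_orthogonal_primitive:
  assumes "gaussian_vec v" "primitive_vec v" "gaussian_int \<beta>" "hinner v v = \<beta> * cnj \<beta>"
  obtains y where "gaussian_vec y" "hinner v y = 0" "hinner y y = \<beta> * cnj \<beta>"
proof -
  have "\<beta> \<noteq> 0"
    using primitive_vec_hinner_self_nonzero[OF assms(2)] assms(4) by auto
  obtain y1 y2 where "orth_cong v \<beta> y1" "orth_cong v \<beta> y2" "gram2 y1 y2 = (\<beta> * cnj \<beta>) * (\<beta> * cnj \<beta>)"
    using orth_cong_pair[OF assms] .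
  then obtain y where "orth_cong v \<beta> y" "hinner y y = \<beta> * cnj \<beta>"
    using orth_cong_short_vector[OF assms(4) \<open>\<beta> \<noteq> 0\<close>] by blast
  then show ?thesis
    using that unfolding orth_cong_def by blast
qed

lemma exists_orthogonal_to_one:
  assumes "gaussian_vec v" "gaussian_int \<beta>" "\<beta> \<noteq> 0" and norm: "hinner v v = \<beta> * cnj \<beta>"
  obtains w where "gaussian_vec w" "hinner v w = 0" "hinner w w = \<beta> * cnj \<beta>"
proof -
  obtain h v' where v': "gaussian_int h" "gaussian_vec v'" "primitive_vec v'"
      "v 0 = h * v' 0" "v 1 = h * v' 1" "v 2 = h * v' 2"
    using gaussian_vec_content[OF assms(1)] .
  have vv: "hinner v v = h * cnj h * hinner v' v'"
    using v'(4-6) by (simp add: hinner_def algebra_simps)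
  then have "h \<noteq> 0"
    using norm assms(3) by auto
  have "hinner v' v' * (h * cnj h) = \<beta> * cnj \<beta>"
    using vv norm by (simp add: mult.commute)
  then obtain t where t: "gaussian_int t" "t * cnj t = hinner v' v'"
    using gaussian_norm_quotient[OF assms(2) v'(1) \<open>h \<noteq> 0\<close> gaussian_int_hinner[OF v'(2,2)]]
    by blast
  then obtain y where y: "gaussian_vec y" "hinner v' y = 0" "hinner y y = t * cnj t"
    using exists_orthogonal_primitive[OF v'(2,3) t(1)] by auto
  have "hinner v (\<lambda>k. h * y k) = cnj h * h * hinner v' y"
    using v'(4-6) by (simp add: hinner_def algebra_simps)
  moreover have "h * cnj h * hinner y y = \<beta> * cnj \<beta>"
    using vv norm t(2) y(3) by simp
  ultimately show ?thesis
    using that[of "\<lambda>k. h * y k"] v'(1) y(1,2) by (simp add: ac_simps)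
qed

section \<open>Icubes\<close>

lemma herm_col_prod_3: "herm_col_prod 3 M j j' = hinner (\<lambda>i. M i j) (\<lambda>i. M i j')"
  by (simp add: herm_col_prod_def hinner_def eval_nat_numeral)

lemma icube_3_column:
  assumes "icube 3 k lam A" "j < k"
  shows "gaussian_vec (\<lambda>i. A i j)" "hinner (\<lambda>i. A i j) (\<lambda>i. A i j) = of_real lam"
  using assms by (auto simp: icube_def gaussian_vec_def simp flip: herm_col_prod_3)

lemma icube_3_orthogonal:
  assumes "icube 3 k lam A" "j < k" "j' < k" "j \<noteq> j'"
  shows "hinner (\<lambda>i. A i j) (\<lambda>i. A i j') = 0"
  using assms by (auto simp: icube_def simp flip: herm_col_prod_3)

lemma icube_3_3_vec3:
  assumes "lam > 0" "gaussian_vec x" "gaussian_vec y" "gaussian_vec z"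
    and "hinner x x = of_real lam" "hinner y y = of_real lam" "hinner z z = of_real lam"
    and "hinner x y = 0" "hinner x z = 0" "hinner y z = 0"
  shows "icube 3 3 lam (\<lambda>i j. vec3 (x i) (y i) (z i) j)"
proof -
  let ?B = "\<lambda>i j. vec3 (x i) (y i) (z i) j"
  have "hinner y x = 0" "hinner z x = 0" "hinner z y = 0"
    using assms(8-10) hinner_cnj_commute by (metis complex_cnj_zero)+
  then have "hinner (\<lambda>i. ?B i j) (\<lambda>i. ?B i j') = (if j = j' then of_real lam else 0)"
    if "j < 3" "j' < 3" for j j'
    using less_3_cases[OF that(1)] less_3_cases[OF that(2)] assms(5-10) by auto
  moreover have "gaussian_int (?B i j)" if "i < 3" "j < 3" for i j
    using less_3_cases[OF that(1)] less_3_cases[OF that(2)] assms(2-4)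
    by (auto simp: gaussian_vec_def)
  ultimately show ?thesis
    using assms(1) by (simp add: icube_def herm_col_prod_3)
qed

lemma extends_to_icube_of_prefix:
  assumes "icube n k lam B" "\<forall>i<n. \<forall>j<l. B i j = A i j" "l \<le> k"
  shows "extends_to_icube n l k lam A"
  unfolding extends_to_icube_def using assms by (intro exI[of _ B] exI[of _ id]) auto

lemma icube_3_of_orthogonal_pair:
  assumes "gaussian_int \<beta>" "\<beta> * cnj \<beta> = of_real lam" "lam > 0" "gaussian_vec a" "gaussian_vec b"
    and "hinner a a = of_real lam" "hinner b b = of_real lam" "hinner a b = 0"
  obtains c where "icube 3 3 lam (\<lambda>i j. vec3 (a i) (b i) (c i) j)"
proof -
  have "\<beta> \<noteq> 0"
    using assms(2,3) by auto
  obtain c where "gaussian_vec c" "hinner a c = 0" "hinner b c = 0" "hinner c c = of_real lam"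
    using exists_orthogonal_to_two[OF assms(4,5,1) \<open>\<beta> \<noteq> 0\<close>] assms(2,6-8) by metis
  then show ?thesis
    using that icube_3_3_vec3[OF assms(3-5)] assms(6-8) by blast
qed

lemma icube_3_completion:
  assumes "gaussian_int \<beta>" "\<beta> * cnj \<beta> = of_real lam" "icube 3 k lam A"
  obtains B where "icube 3 3 lam B" "\<forall>i<3. \<forall>j<k. B i j = A i j"
proof -
  have "lam > 0" "1 \<le> k" "k \<le> 3"
    using assms(3) by (auto simp: icube_def)
  let ?a = "\<lambda>i. A i 0" and ?b = "\<lambda>i. A i 1"
  have a: "gaussian_vec ?a" "hinner ?a ?a = of_real lam"
    using icube_3_column[OF assms(3)] \<open>1 \<le> k\<close> by auto
  consider "k = 1" | "k = 2" | "k = 3"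
    using \<open>1 \<le> k\<close> \<open>k \<le> 3\<close> by linarith
  then show ?thesis
  proof cases
    case 1
    have "\<beta> \<noteq> 0"
      using assms(2) \<open>lam > 0\<close> by auto
    then obtain b where "gaussian_vec b" "hinner ?a b = 0" "hinner b b = of_real lam"
      using exists_orthogonal_to_one[OF a(1) assms(1)] a(2) assms(2) by metis
    then obtain c where "icube 3 3 lam (\<lambda>i j. vec3 (A i 0) (b i) (c i) j)"
      using icube_3_of_orthogonal_pair[OF assms(1,2) \<open>lam > 0\<close> a(1)] a(2) by metis
    then show ?thesis
      using that 1 by simp
  next
    case 2
    then obtain c where "icube 3 3 lam (\<lambda>i j. vec3 (A i 0) (A i 1) (c i) j)"
      using icube_3_of_orthogonal_pair[OF assms(1,2) \<open>lam > 0\<close> a(1)] a(2)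
        icube_3_column[OF assms(3), of 1] icube_3_orthogonal[OF assms(3), of 0 1] by auto
    moreover have "\<forall>i<3. \<forall>j<k. vec3 (A i 0) (A i 1) (c i) j = A i j"
      using 2 by (auto simp: less_2_cases_iff)
    ultimately show ?thesis
      using that by blast
  next
    case 3
    then show ?thesis
      using that assms(3) by blast
  qed
qed

theorem mainTheorem4:
  fixes lam :: int and k :: nat and A :: "nat \<Rightarrow> nat \<Rightarrow> complex"
  assumes "lam > 0"
    and "\<exists>a b :: int. lam = a\<^sup>2 + b\<^sup>2"
    and "1 \<le> k" and "k \<le> 3"
    and "icube 3 k (real_of_int lam) A"
  shows "extends_to_icube 3 k 3 (real_of_int lam) A"
proof -
  obtain a b :: int where ab: "lam = a\<^sup>2 + b\<^sup>2"
    using assms(2) by blast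
  define \<beta> where "\<beta> = complex_of_int a + \<i> * complex_of_int b"
  have "gaussian_int \<beta>"
    by (simp add: \<beta>_def gaussian_int_def)
  moreover have "\<beta> * cnj \<beta> = of_real (real_of_int lam)"
    unfolding complex_mult_cnj by (simp add: \<beta>_def ab)
  ultimately obtain B where "icube 3 3 (real_of_int lam) B" "\<forall>i<3. \<forall>j<k. B i j = A i j"
    using icube_3_completion assms(5) by blast
  then show ?thesis
    using assms(4) by (rule extends_to_icube_of_prefix)
qed

end
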